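(* Let $n,k$ be positive integers with $k<n/2$. For any deterministic algorithm, adaptive or non-adaptive, that uses interventions of size at most $k$ and fully orients $\vec{K}_n(\sigma)$ for every total ordering $\sigma$ of $[1:n]$ (in the learning model of the context), there exists $\sigma$ for which the set of interventions $\mathcal{I}$ it uses satisfies $\frac{n}{k}\log_{\frac{ne}{k}} n \le |\mathcal{I}|$. Moreover, there exists a family $\mathcal{I}$ of subsets of $[1:n]$, each of size at most $k$, with $|\mathcal{I}| \le (\lceil n/k \rceil - 1)\lceil \log_{\lceil n/k\rceil} n\rceil$, which fully orients $\vec{K}_n(\sigma)$ for every $\sigma$.
   Context: For a total ordering $\sigma$ of $V=[1:n]$, $\vec{K}_n(\sigma)$ is the DAG on the complete graph $K_n$ in which each edge is directed from the earlier to the later vertex in $\sigma$. Learning model: the learner maintains a partially directed graph, initially the undirected $K_n$. Performing an intervention on $I\subseteq V$: (R0) every edge with exactly one endpoint in $I$ becomes oriented as in the true DAG; then the Meek rules are applied repeatedly until nothing more can be oriented: (R1) orient $a-b$ as $a\to b$ if there is $c$ with $c\to a$ and $c,b$ non-adjacent; (R2) orient $a-b$ as $a\to b$ if there is $c$ with $a\to c$, $c\to b$; (R3) orient $a-b$ as $a\to b$ if there are $c,d$ with $a-c$, $a-d$, $c\to b$, $d\to b$, $c,d$ non-adjacent; (R4) orient $a-c$ as $a\to c$ if there are $b,d$ with $b\to c$, $a-d$, $a-b$, $d\to b$, $c,d$ non-adjacent. A non-adaptive algorithm fixes $\mathcal{I}$ in advance; an adaptive deterministic algorithm chooses $I_{m+1}$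 as a deterministic function of the partially directed graph after $I_1,\ldots,I_m$. "Fully orients" means that after all interventions in $\mathcal{I}$ all edges are oriented. *)

theory Defs
  imports Complex_Main
begin

text \<open>The skeleton is always the complete graph K_n on V.
A partially directed graph on this skeleton is represented by the set D of its
directed edges (a pair (a,b) in D means a -> b); every other pair of distinct
vertices of V is an undirected edge.\<close>

type_synonym pdag = "(nat \<times> nat) set"

definition adj :: "nat \<Rightarrow> nat \<Rightarrow> nat \<Rightarrow> bool" where
  "adj n a b \<longleftrightarrow> a \<in> {1..n} \<and> b \<in> {1..n} \<and> a \<noteq> b"

definition nonadj :: "nat \<Rightarrow> nat \<Rightarrow> nat \<Rightarrow> bool" where
  "nonadj n a b \<longleftrightarrow> a \<in> {1..n} \<and> b \<in> {1..n} \<and> a \<noteq> b \<and> \<not> adj n a b"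

definition undir :: "nat \<Rightarrow> pdag \<Rightarrow> nat \<Rightarrow> nat \<Rightarrow> bool" where
  "undir n D a b \<longleftrightarrow> adj n a b \<and> (a, b) \<notin> D \<and> (b, a) \<notin> D"

text \<open>Meek rules: meek_rule n D a b means that some rule R1--R4 orients the
undirected edge a - b as a -> b.\<close>

definition meek_rule :: "nat \<Rightarrow> pdag \<Rightarrow> nat \<Rightarrow> nat \<Rightarrow> bool" where
  "meek_rule n D a b \<longleftrightarrow> undir n D a b \<and>
     ((\<exists>c. (c, a) \<in> D \<and> nonadj n c b)
    \<or> (\<exists>c. (a, c) \<in> D \<and> (c, b) \<in> D)
    \<or> (\<exists>c d. undir n D a c \<and> undir n D a d \<and> (c, b) \<in> D \<and> (d, b) \<in> D \<and> nonadj n c d)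
    \<or> (\<exists>c d. (c, b) \<in> D \<and> undir n D a d \<and> undir n D a c \<and> (d, c) \<in> D \<and> nonadj n b d))"

definition meek_step :: "nat \<Rightarrow> pdag \<Rightarrow> pdag \<Rightarrow> bool" where
  "meek_step n D D' \<longleftrightarrow> (\<exists>a b. meek_rule n D a b \<and> D' = insert (a, b) D)"

definition meek_closure :: "nat \<Rightarrow> pdag \<Rightarrow> pdag" where
  "meek_closure n D = (THE D'. (meek_step n)\<^sup>*\<^sup>* D D' \<and> \<not> (\<exists>D''. meek_step n D' D''))"

text \<open>A total ordering of [1:n] is given by its position function sigma, a
bijection of [1:n]; the true DAG orients u -> v iff sigma u < sigma v.\<close>

definition total_ordering :: "nat \<Rightarrow> (nat \<Rightarrow> nat) \<Rightarrow> bool" where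
  "total_ordering n \<sigma> \<longleftrightarrow> bij_betw \<sigma> {1..n} {1..n}"

definition cut_edges :: "nat \<Rightarrow> (nat \<Rightarrow> nat) \<Rightarrow> nat set \<Rightarrow> pdag" where
  "cut_edges n \<sigma> I = {(u, v). adj n u v \<and> \<sigma> u < \<sigma> v \<and> (u \<in> I \<longleftrightarrow> v \<notin> I)}"

definition intervene :: "nat \<Rightarrow> (nat \<Rightarrow> nat) \<Rightarrow> pdag \<Rightarrow> nat set \<Rightarrow> pdag" where
  "intervene n \<sigma> D I =
     meek_closure n ((D - {(v, u). (u, v) \<in> cut_edges n \<sigma> I}) \<union> cut_edges n \<sigma> I)"

definition apply_list :: "nat \<Rightarrow> (nat \<Rightarrow> nat) \<Rightarrow> pdag \<Rightarrow> nat set list \<Rightarrow> pdag" where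
  "apply_list n \<sigma> D Is = fold (\<lambda>I D. intervene n \<sigma> D I) Is D"

definition fully_oriented :: "nat \<Rightarrow> pdag \<Rightarrow> bool" where
  "fully_oriented n D \<longleftrightarrow> (\<forall>a b. adj n a b \<longrightarrow> (a, b) \<in> D \<or> (b, a) \<in> D)"

text \<open>Non-adaptive: a fixed finite family of interventions, all performed starting
from the undirected K_n.  The final result does not depend on the order in which
the interventions are performed; to avoid relying on that, we give two versions:
some enumeration of the family fully orients (used as hypothesis of the lower
bound), and every enumeration fully orients (used in the conclusion of the
upper bound).\<close>

definition family_orients_some_order :: "nat \<Rightarrow> nat set set \<Rightarrow> bool" where
  "family_orients_some_order n \<I> \<longleftrightarrow>
     (\<forall>\<sigma>. total_ordering n \<sigma> \<longrightarrow>
        (\<exists>Is. distinct Is \<and> set Is = \<I> \<and> fully_oriented n (apply_list n \<sigma> {} Is)))"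

definition family_orients_every_order :: "nat \<Rightarrow> nat set set \<Rightarrow> bool" where
  "family_orients_every_order n \<I> \<longleftrightarrow> finite \<I> \<and>
     (\<forall>\<sigma>. total_ordering n \<sigma> \<longrightarrow>
        (\<forall>Is. distinct Is \<and> set Is = \<I> \<longrightarrow> fully_oriented n (apply_list n \<sigma> {} Is)))"

text \<open>Adaptive deterministic algorithm: a function from the current partially
directed graph to the next intervention (Some I) or to stopping (None).
adaptive_run alg n sigma m = (graph, interventions used) after m rounds.\<close>

type_synonym algorithm = "pdag \<Rightarrow> nat set option"

fun adaptive_run :: "algorithm \<Rightarrow> nat \<Rightarrow> (nat \<Rightarrow> nat) \<Rightarrow> nat \<Rightarrow> pdag \<times> nat set list" where
  "adaptive_run alg n \<sigma> 0 = ({}, [])"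
| "adaptive_run alg n \<sigma> (Suc m) =
     (case adaptive_run alg n \<sigma> m of (D, Is) \<Rightarrow>
        (case alg D of None \<Rightarrow> (D, Is) | Some I \<Rightarrow> (intervene n \<sigma> D I, Is @ [I])))"

definition stops_at :: "algorithm \<Rightarrow> nat \<Rightarrow> (nat \<Rightarrow> nat) \<Rightarrow> nat \<Rightarrow> bool" where
  "stops_at alg n \<sigma> m \<longleftrightarrow> alg (fst (adaptive_run alg n \<sigma> m)) = None"

definition alg_fully_orients :: "algorithm \<Rightarrow> nat \<Rightarrow> nat \<Rightarrow> bool" where
  "alg_fully_orients alg n k \<longleftrightarrow>
     (\<forall>\<sigma>. total_ordering n \<sigma> \<longrightarrow>
        (\<exists>m. stops_at alg n \<sigma> m \<and> fully_oriented n (fst (adaptive_run alg n \<sigma> m))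
           \<and> (\<forall>I \<in> set (snd (adaptive_run alg n \<sigma> m)). I \<subseteq> {1..n} \<and> card I \<le> k)))"

end

theory Submission
  imports Defs
begin

(* On the complete skeleton only Meek rule R2 can fire, so a sequence of interventions orients
   exactly the transitive closure of its cut edges, whatever the order of the interventions.
   An adversary answers the interventions with an ordering consistent with the membership
   patterns (keys) of the vertices seen so far; once the partition of the vertices by keys stops
   refining, two vertices that no intervention separates can be swapped without the algorithm
   noticing, so the edge between them stays unoriented. Hence every successful algorithm,
   adaptive or not, uses a separating family. For a separating family with sets of size at most
   k, splitting the n vertices into singletons costs n ln n, which is at most the sum over the
   sets I of n times the binary entropy of the split made by I, and each such term is at most
   k ln (n e / k). Conversely, the level sets of the nonzero values of (shifted) digits in base
   ceil (n / k) form a separating family of the required size. *)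

section \<open>Meek closure on the complete graph\<close>

definition dag_edges :: "nat \<Rightarrow> (nat \<Rightarrow> nat) \<Rightarrow> pdag" where
  "dag_edges n \<sigma> = {(a, b). adj n a b \<and> \<sigma> a < \<sigma> b}"

lemma trans_dag_edges: "trans (dag_edges n \<sigma>)"
  unfolding trans_def dag_edges_def adj_def by auto

lemma finite_dag_edges: "finite (dag_edges n \<sigma>)"
  by (rule finite_subset[of _ "{1..n} \<times> {1..n}"]) (auto simp: dag_edges_def adj_def)

lemma trancl_subset_dag_edges: "D \<subseteq> dag_edges n \<sigma> \<Longrightarrow> D\<^sup>+ \<subseteq> dag_edges n \<sigma>"
  by (metis trans_dag_edges trancl_id trancl_mono subsetI)

lemma cut_edges_subset_dag_edges: "cut_edges n \<sigma> I \<subseteq> dag_edges n \<sigma>"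
  by (auto simp: cut_edges_def dag_edges_def)

text \<open>The skeleton is complete, so R1, R3 and R4 never fire: only R2 remains.\<close>

lemma meek_rule_complete:
  "meek_rule n D a b \<longleftrightarrow> undir n D a b \<and> (\<exists>c. (a, c) \<in> D \<and> (c, b) \<in> D)"
  by (auto simp: meek_rule_def nonadj_def adj_def)

lemma meek_steps_between:
  assumes "(meek_step n)\<^sup>*\<^sup>* D D'"
  shows "D \<subseteq> D' \<and> D' \<subseteq> D\<^sup>+"
  using assms
proof (induction rule: rtranclp_induct)
  case (step D' D'')
  then obtain a b c where "D'' = insert (a, b) D'" "(a, c) \<in> D'" "(c, b) \<in> D'"
    by (auto simp: meek_step_def meek_rule_complete)
  moreover from step.IH \<open>(a, c) \<in> D'\<close> \<open>(c, b) \<in> D'\<close> have "(a, b) \<in> D\<^sup>+"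
    by (meson subsetD trancl_trans)
  ultimately show ?case using step.IH by auto
qed auto

lemma meek_terminal_trans:
  assumes "D \<subseteq> dag_edges n \<sigma>" and "\<nexists>D'. meek_step n D D'"
  shows "trans D"
proof (rule transI)
  fix a c b assume ac: "(a, c) \<in> D" and cb: "(c, b) \<in> D"
  have "\<sigma> a < \<sigma> c" "\<sigma> c < \<sigma> b" "adj n a c" "adj n c b"
    using ac cb assms(1) by (auto simp: dag_edges_def)
  then have "adj n a b" "\<sigma> a < \<sigma> b" by (auto simp: adj_def)
  then have "undir n D a b \<or> (a, b) \<in> D"
    using assms(1) by (auto simp: undir_def dag_edges_def)
  with ac cb assms(2) show "(a, b) \<in> D"
    by (auto simp: meek_step_def meek_rule_complete)
qed

lemma meek_terminal_exists:
  assumes "D \<subseteq> dag_edges n \<sigma>"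
  shows "\<exists>D'. (meek_step n)\<^sup>*\<^sup>* D D' \<and> (\<nexists>D''. meek_step n D' D'')"
  using assms
proof (induction "card (dag_edges n \<sigma> - D)" arbitrary: D rule: less_induct)
  case less
  show ?case
  proof (cases "\<exists>D'. meek_step n D D'")
    case True
    then obtain a b c where ab: "undir n D a b" "(a, c) \<in> D" "(c, b) \<in> D"
      by (auto simp: meek_step_def meek_rule_complete)
    then have step: "meek_step n D (insert (a, b) D)"
      by (auto simp: meek_step_def meek_rule_complete)
    have "(a, b) \<in> dag_edges n \<sigma>" "(a, b) \<notin> D"
      using ab subsetD[OF less.prems ab(2)] subsetD[OF less.prems ab(3)]
      by (auto simp: dag_edges_def undir_def)
    then have "card (dag_edges n \<sigma> - insert (a, b) D) < card (dag_edges n \<sigma> - D)"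
      by (intro psubset_card_mono) (auto simp: finite_dag_edges)
    moreover have "insert (a, b) D \<subseteq> dag_edges n \<sigma>"
      using \<open>(a, b) \<in> dag_edges n \<sigma>\<close> less.prems by blast
    ultimately obtain D' where "(meek_step n)\<^sup>*\<^sup>* (insert (a, b) D) D'" "\<nexists>D''. meek_step n D' D''"
      using less.hyps by blast
    with step show ?thesis by (meson converse_rtranclp_into_rtranclp)
  qed blast
qed

lemma meek_closure_eq_trancl:
  assumes "D \<subseteq> dag_edges n \<sigma>"
  shows "meek_closure n D = D\<^sup>+"
proof -
  have terminal_eq: "D' = D\<^sup>+" if "(meek_step n)\<^sup>*\<^sup>* D D'" "\<nexists>D''. meek_step n D' D''" for D'
  proof -
    have D': "D \<subseteq> D'" "D' \<subseteq> D\<^sup>+" using meek_steps_between[OF that(1)] by auto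
    then have "D' \<subseteq> dag_edges n \<sigma>" using trancl_subset_dag_edges[OF assms] by blast
    then have "trans D'" using that(2) by (rule meek_terminal_trans)
    have "D\<^sup>+ \<subseteq> D'\<^sup>+" using D'(1) by (auto intro: trancl_mono)
    with D'(2) \<open>trans D'\<close> show ?thesis by (simp add: trancl_id)
  qed
  obtain D' where D': "(meek_step n)\<^sup>*\<^sup>* D D'" "\<nexists>D''. meek_step n D' D''"
    using meek_terminal_exists[OF assms] by blast
  show ?thesis
    unfolding meek_closure_def
  proof (rule the_equality)
    show "(meek_step n)\<^sup>*\<^sup>* D (D\<^sup>+) \<and> (\<nexists>D''. meek_step n (D\<^sup>+) D'')"
      using D' terminal_eq[OF D'] by simp
  qed (use terminal_eq in blast)
qed

lemma intervene_eq_trancl: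
  assumes "D \<subseteq> dag_edges n \<sigma>"
  shows "intervene n \<sigma> D I = (D \<union> cut_edges n \<sigma> I)\<^sup>+"
proof -
  have "D - {(v, u). (u, v) \<in> cut_edges n \<sigma> I} = D"
    using assms by (auto simp: cut_edges_def dag_edges_def)
  moreover have "D \<union> cut_edges n \<sigma> I \<subseteq> dag_edges n \<sigma>"
    using assms cut_edges_subset_dag_edges by blast
  ultimately show ?thesis by (simp add: intervene_def meek_closure_eq_trancl)
qed

lemma intervene_subset_dag_edges:
  "D \<subseteq> dag_edges n \<sigma> \<Longrightarrow> intervene n \<sigma> D I \<subseteq> dag_edges n \<sigma>"
  by (simp add: intervene_eq_trancl trancl_subset_dag_edges cut_edges_subset_dag_edges)

lemma apply_list_eq_trancl:
  assumes "trans D" and "D \<subseteq> dag_edges n \<sigma>"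
  shows "apply_list n \<sigma> D Is = (D \<union> (\<Union>I\<in>set Is. cut_edges n \<sigma> I))\<^sup>+"
  using assms
proof (induction Is arbitrary: D)
  case Nil
  then show ?case by (simp add: apply_list_def trancl_id)
next
  case (Cons I Is)
  let ?D = "intervene n \<sigma> D I"
  have "apply_list n \<sigma> D (I # Is) = apply_list n \<sigma> ?D Is"
    by (simp add: apply_list_def)
  also have "\<dots> = ((D \<union> cut_edges n \<sigma> I)\<^sup>+ \<union> (\<Union>J\<in>set Is. cut_edges n \<sigma> J))\<^sup>+"
    using Cons.IH[of ?D] Cons.prems intervene_subset_dag_edges
    by (simp add: intervene_eq_trancl)
  also have "\<dots> = (D \<union> (\<Union>J\<in>set (I # Is). cut_edges n \<sigma> J))\<^sup>+"
    by (simp add: trancl_trancl_Un Un_assoc)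
  finally show ?case .
qed

lemma apply_list_empty:
  "apply_list n \<sigma> {} Is = (\<Union>I\<in>set Is. cut_edges n \<sigma> I)\<^sup>+"
  using apply_list_eq_trancl[of "{}"] by (simp add: trans_def)

section \<open>Keys and the adversary\<close>

definition separates :: "'a set set \<Rightarrow> 'a set \<Rightarrow> bool" where
  "separates F S \<longleftrightarrow> (\<forall>u\<in>S. \<forall>v\<in>S. u \<noteq> v \<longrightarrow> (\<exists>I\<in>F. (u \<in> I) \<noteq> (v \<in> I)))"

text \<open>The membership pattern of u in the interventions Is, read as a binary number whose
most significant digit is the first intervention.\<close>

definition key :: "'a set list \<Rightarrow> 'a \<Rightarrow> nat" where
  "key Is u = foldl (\<lambda>acc I. 2 * acc + (if u \<in> I then 1 else 0)) 0 Is"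

lemma key_Nil [simp]: "key [] u = 0"
  by (simp add: key_def)

lemma key_snoc: "key (Is @ [I]) u = 2 * key Is u + (if u \<in> I then 1 else 0)"
  by (simp add: key_def)

lemma key_less_power: "key Is u < 2 ^ length Is"
  by (induction Is rule: rev_induct) (auto simp: key_snoc)

lemma key_append: "key (Is @ Js) u = key Is u * 2 ^ length Js + key Js u"
proof (induction Js rule: rev_induct)
  case (snoc J Js)
  then show ?case by (simp add: key_snoc algebra_simps flip: append_assoc)
qed simp

lemma key_append_div: "key (Is @ Js) u div 2 ^ length Js = key Is u"
  using key_append[of Is Js u] key_less_power[of Js u] by simp

lemma key_eq_iff: "key Is u = key Is v \<longleftrightarrow> (\<forall>I\<in>set Is. u \<in> I \<longleftrightarrow> v \<in> I)"
proof (induction Is rule: rev_induct)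
  case (snoc I Is)
  have "2 * a + (if P then 1 else 0) = 2 * b + (if Q then 1 else (0::nat)) \<longleftrightarrow> a = b \<and> P = Q"
    for a b P Q by (cases P; cases Q) presburger+
  with snoc show ?case by (auto simp: key_snoc)
qed simp

definition key_consistent :: "nat \<Rightarrow> nat set list \<Rightarrow> (nat \<Rightarrow> nat) \<Rightarrow> bool" where
  "key_consistent n Is \<sigma> \<longleftrightarrow> (\<forall>u\<in>{1..n}. \<forall>v\<in>{1..n}. key Is u < key Is v \<longrightarrow> \<sigma> u < \<sigma> v)"

lemma key_consistent_prefix:
  assumes "key_consistent n (Is @ Js) \<sigma>"
  shows "key_consistent n Is \<sigma>"
  unfolding key_consistent_def
proof (intro ballI impI)
  fix u v assume uv: "u \<in> {1..n}" "v \<in> {1..n}" and "key Is u < key Is v"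
  then have "key (Is @ Js) u < key (Is @ Js) v"
    by (metis key_append_div div_le_mono not_le)
  with assms uv show "\<sigma> u < \<sigma> v" by (simp add: key_consistent_def)
qed

lemma key_consistent_append_stable:
  assumes card_eq: "card (key (Is @ Js) ` {1..n}) = card (key Is ` {1..n})"
    and "key_consistent n Is \<sigma>"
  shows "key_consistent n (Is @ Js) \<sigma>"
  unfolding key_consistent_def
proof (intro ballI impI)
  fix u v assume u: "u \<in> {1..n}" and v: "v \<in> {1..n}"
    and less: "key (Is @ Js) u < key (Is @ Js) v"
  define h where "h z = z div 2 ^ length Js" for z :: nat
  have key_Is: "key Is w = h (key (Is @ Js) w)" for w
    by (simp add: h_def key_append_div)
  have "h ` key (Is @ Js) ` {1..n} = key Is ` {1..n}"
    by (auto simp: image_image key_Is)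
  then have inj: "inj_on h (key (Is @ Js) ` {1..n})"
    using card_eq by (intro eq_card_imp_inj_on) auto
  have "key Is u \<noteq> key Is v"
  proof
    assume "key Is u = key Is v"
    then have "h (key (Is @ Js) u) = h (key (Is @ Js) v)" by (simp add: key_Is)
    then have "key (Is @ Js) u = key (Is @ Js) v"
      by (rule inj_onD[OF inj]) (use u v in auto)
    with less show False by simp
  qed
  moreover have "key Is u \<le> key Is v"
    using less by (simp add: key_Is h_def div_le_mono)
  ultimately show "\<sigma> u < \<sigma> v"
    using assms(2) u v by (simp add: key_consistent_def)
qed

lemma cut_edges_key_consistent:
  assumes "I \<in> set Is" and "key_consistent n Is \<sigma>" and "key_consistent n Is \<sigma>'"
  shows "cut_edges n \<sigma> I = cut_edges n \<sigma>' I"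
proof -
  have "\<sigma> u < \<sigma> v \<longleftrightarrow> \<sigma>' u < \<sigma>' v" if "adj n u v" "u \<in> I \<longleftrightarrow> v \<notin> I" for u v
  proof -
    have "key Is u \<noteq> key Is v" unfolding key_eq_iff using that(2) assms(1) by blast
    moreover have "u \<in> {1..n}" "v \<in> {1..n}" using that(1) by (auto simp: adj_def)
    ultimately have "\<sigma> u < \<sigma> v \<and> \<sigma>' u < \<sigma>' v \<or> \<sigma> v < \<sigma> u \<and> \<sigma>' v < \<sigma>' u"
      using assms(2,3) unfolding key_consistent_def by (meson linorder_neqE_nat)
    then show ?thesis by auto
  qed
  then show ?thesis by (auto simp: cut_edges_def)
qed

lemma key_consistent_swap:
  assumes "key_consistent n Is \<sigma>" and "key Is u = key Is v"
    and "u \<in> {1..n}" and "v \<in> {1..n}"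
  shows "key_consistent n Is (\<sigma>(u := \<sigma> v, v := \<sigma> u))"
proof -
  define \<tau> where "\<tau> w = (if w = u then v else if w = v then u else w)" for w
  have "\<sigma>(u := \<sigma> v, v := \<sigma> u) = \<sigma> \<circ> \<tau>" by (auto simp: \<tau>_def)
  moreover have "key Is (\<tau> w) = key Is w" for w using assms(2) by (simp add: \<tau>_def)
  moreover have "\<tau> w \<in> {1..n}" if "w \<in> {1..n}" for w
    using that assms(3,4) by (simp add: \<tau>_def)
  ultimately show ?thesis
    using assms(1) unfolding key_consistent_def by (metis comp_apply)
qed

lemma not_fully_oriented_swap:
  assumes "u \<in> {1..n}" and "v \<in> {1..n}" and "u \<noteq> v"
    and "D \<subseteq> dag_edges n \<sigma>" and "D \<subseteq> dag_edges n (\<sigma>(u := \<sigma> v, v := \<sigma> u))"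
  shows "\<not> fully_oriented n D"
proof
  assume "fully_oriented n D"
  moreover have "adj n u v" using assms(1-3) by (simp add: adj_def)
  ultimately have "(u, v) \<in> D \<or> (v, u) \<in> D" by (simp add: fully_oriented_def)
  then show False
  proof
    assume "(u, v) \<in> D"
    with assms(3-5) show False by (fastforce simp: dag_edges_def)
  next
    assume "(v, u) \<in> D"
    with assms(3-5) show False by (fastforce simp: dag_edges_def)
  qed
qed

text \<open>The adversary argument: swapping two vertices with equal keys preserves consistency,
so D would have to agree with both orders of the pair.\<close>

lemma separates_if_key_determined:
  assumes determined: "\<And>\<sigma>. key_consistent n Is \<sigma> \<Longrightarrow> D \<subseteq> dag_edges n \<sigma>"
    and "key_consistent n Is \<sigma>" and "fully_oriented n D"
  shows "separates (set Is) {1..n}"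
  unfolding separates_def
proof (intro ballI impI)
  fix u v assume u: "u \<in> {1..n}" and v: "v \<in> {1..n}" and "u \<noteq> v"
  show "\<exists>I\<in>set Is. (u \<in> I) \<noteq> (v \<in> I)"
  proof (rule ccontr)
    assume "\<not> ?thesis"
    then have "key Is u = key Is v" by (simp add: key_eq_iff)
    then have "key_consistent n Is (\<sigma>(u := \<sigma> v, v := \<sigma> u))"
      using key_consistent_swap assms(2) u v by blast
    then show False
      using not_fully_oriented_swap[OF u v \<open>u \<noteq> v\<close>] determined assms(2,3) by blast
  qed
qed

definition rank :: "nat \<Rightarrow> (nat \<Rightarrow> nat) \<Rightarrow> nat \<Rightarrow> nat" where
  "rank n g u = card {w \<in> {1..n}. g w < g u} + 1"

lemma rank_less:
  assumes "u \<in> {1..n}" and "v \<in> {1..n}" and "g u < g v"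
  shows "rank n g u < rank n g v"
proof -
  have "{w \<in> {1..n}. g w < g u} \<subset> {w \<in> {1..n}. g w < g v}" using assms by auto
  then show ?thesis by (simp add: rank_def psubset_card_mono)
qed

lemma total_ordering_rank:
  assumes "inj_on g {1..n}"
  shows "total_ordering n (rank n g)"
proof -
  have inj: "inj_on (rank n g) {1..n}"
  proof (rule inj_onI)
    fix u v assume uv: "u \<in> {1..n}" "v \<in> {1..n}" "rank n g u = rank n g v"
    then have "\<not> g u < g v" "\<not> g v < g u" using rank_less by (metis less_irrefl)+
    with assms uv show "u = v" by (metis inj_onD linorder_neqE_nat)
  qed
  have "rank n g u \<in> {1..n}" if u: "u \<in> {1..n}" for u
  proof -
    have "card {w \<in> {1..n}. g w < g u} \<le> card ({1..n} - {u})" by (intro card_mono) auto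
    with u show ?thesis by (auto simp: rank_def)
  qed
  then have "rank n g ` {1..n} = {1..n}" using endo_inj_surj[OF _ _ inj] by blast
  with inj show ?thesis by (simp add: total_ordering_def bij_betw_def)
qed

definition key_order :: "nat \<Rightarrow> nat set list \<Rightarrow> nat \<Rightarrow> nat" where
  "key_order n Is = rank n (\<lambda>u. key Is u * (n + 1) + u)"

lemma key_order:
  "total_ordering n (key_order n Is) \<and> key_consistent n Is (key_order n Is)"
proof
  define g where "g u = key Is u * (n + 1) + u" for u
  have "inj_on g {1..n}"
  proof (rule inj_onI)
    fix u v assume "u \<in> {1..n}" "v \<in> {1..n}" "g u = g v"
    then show "u = v" using mod_mult_self3[of "key Is _" "n + 1"]
      by (metis g_def atLeastAtMost_iff le_imp_less_Suc mod_less Suc_eq_plus1)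
  qed
  then show "total_ordering n (key_order n Is)"
    unfolding key_order_def g_def[symmetric] by (rule total_ordering_rank)
  show "key_consistent n Is (key_order n Is)"
    unfolding key_consistent_def key_order_def
  proof (intro ballI impI)
    fix u v assume u: "u \<in> {1..n}" and v: "v \<in> {1..n}" and "key Is u < key Is v"
    have "g u < (key Is u + 1) * (n + 1)" using u by (simp add: g_def)
    also have "\<dots> \<le> key Is v * (n + 1)"
      using \<open>key Is u < key Is v\<close> by (intro mult_le_mono1) simp
    also have "\<dots> \<le> g v" by (simp add: g_def)
    finally show "rank n (\<lambda>u. key Is u * (n + 1) + u) u < rank n (\<lambda>u. key Is u * (n + 1) + u) v"
      using rank_less[OF u v] by (simp add: g_def)
  qed
qed

lemma family_orients_some_order_separates:
  assumes "family_orients_some_order n F"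
  shows "finite F \<and> separates F {1..n}"
proof -
  have "total_ordering n id" by (simp add: total_ordering_def)
  then obtain Is where Is: "set Is = F"
    using assms unfolding family_orients_some_order_def by blast
  then have "finite F" by blast
  obtain Js where Js: "set Js = F" "fully_oriented n (apply_list n (key_order n Is) {} Js)"
    using assms key_order unfolding family_orients_some_order_def by blast
  have "apply_list n (key_order n Is) {} Js \<subseteq> dag_edges n \<sigma>" if "key_consistent n Is \<sigma>" for \<sigma>
  proof -
    have "cut_edges n (key_order n Is) I = cut_edges n \<sigma> I" if "I \<in> F" for I
      using cut_edges_key_consistent key_order that Is \<open>key_consistent n Is \<sigma>\<close> by blast
    then have "apply_list n (key_order n Is) {} Js = (\<Union>I\<in>F. cut_edges n \<sigma> I)\<^sup>+"
      by (simp add: apply_list_empty Js(1))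
    then show ?thesis
      by (simp add: trancl_subset_dag_edges cut_edges_subset_dag_edges UN_least)
  qed
  then have "separates F {1..n}"
    using separates_if_key_determined key_order Js(2) Is by metis
  with \<open>finite F\<close> show ?thesis ..
qed

lemma family_orients_every_order_if_separates:
  assumes "finite F" and "separates F {1..n}"
  shows "family_orients_every_order n F"
  unfolding family_orients_every_order_def
proof (intro conjI allI impI)
  fix \<sigma> Is assume \<sigma>: "total_ordering n \<sigma>" and Is: "distinct Is \<and> set Is = F"
  show "fully_oriented n (apply_list n \<sigma> {} Is)"
    unfolding fully_oriented_def
  proof (intro allI impI)
    fix a b assume ab: "adj n a b"
    then have "a \<in> {1..n}" "b \<in> {1..n}" "a \<noteq> b" by (auto simp: adj_def)
    then obtain I where I: "I \<in> F" "(a \<in> I) \<noteq> (b \<in> I)"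
      using assms(2) unfolding separates_def by blast
    have "\<sigma> a \<noteq> \<sigma> b"
      using \<sigma> \<open>a \<in> {1..n}\<close> \<open>b \<in> {1..n}\<close> \<open>a \<noteq> b\<close>
      unfolding total_ordering_def bij_betw_def by (meson inj_onD)
    then have "(a, b) \<in> cut_edges n \<sigma> I \<or> (b, a) \<in> cut_edges n \<sigma> I"
      using ab I by (auto simp: cut_edges_def adj_def)
    then show "(a, b) \<in> apply_list n \<sigma> {} Is \<or> (b, a) \<in> apply_list n \<sigma> {} Is"
      using I Is by (auto simp: apply_list_empty)
  qed
qed (rule assms(1))

text \<open>The adversary's run: each intervention is answered by an ordering consistent with the
keys of all interventions so far.\<close>

fun canonical_run :: "algorithm \<Rightarrow> nat \<Rightarrow> nat \<Rightarrow> pdag \<times> nat set list" where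
  "canonical_run alg n 0 = ({}, [])"
| "canonical_run alg n (Suc m) =
     (case canonical_run alg n m of (D, Is) \<Rightarrow>
        (case alg D of None \<Rightarrow> (D, Is)
         | Some I \<Rightarrow> (intervene n (key_order n (Is @ [I])) D I, Is @ [I])))"

lemma canonical_run_prefix:
  assumes "j \<le> j'"
  shows "\<exists>Js. snd (canonical_run alg n j') = snd (canonical_run alg n j) @ Js"
  using assms
proof (induction j' rule: dec_induct)
  case (step j')
  then obtain Js where "snd (canonical_run alg n j') = snd (canonical_run alg n j) @ Js" by blast
  then show ?case
    by (cases "canonical_run alg n j'"; cases "alg (fst (canonical_run alg n j'))") auto
qed simp

lemma adaptive_run_eq_canonical_run:
  assumes "key_consistent n (snd (canonical_run alg n j)) \<sigma>"
  shows "adaptive_run alg n \<sigma> j = canonical_run alg n j"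
  using assms
proof (induction j)
  case (Suc j)
  obtain D Is where run: "canonical_run alg n j = (D, Is)" by fastforce
  show ?case
  proof (cases "alg D")
    case None
    with Suc run show ?thesis by simp
  next
    case (Some I)
    with Suc.prems run have consistent: "key_consistent n (Is @ [I]) \<sigma>" by simp
    then have "adaptive_run alg n \<sigma> j = (D, Is)"
      using Suc.IH run key_consistent_prefix by simp
    moreover have "cut_edges n \<sigma> I = cut_edges n (key_order n (Is @ [I])) I"
      using cut_edges_key_consistent[OF _ consistent] key_order by simp
    ultimately show ?thesis
      using Some run by (simp add: intervene_def)
  qed
qed simp

lemma adaptive_run_subset_dag_edges: "fst (adaptive_run alg n \<sigma> j) \<subseteq> dag_edges n \<sigma>"
proof (induction j)
  case (Suc j)
  then show ?case
    by (cases "adaptive_run alg n \<sigma> j"; cases "alg (fst (adaptive_run alg n \<sigma> j))")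
      (auto simp: intervene_subset_dag_edges)
qed simp

lemma adaptive_run_stopped:
  assumes "stops_at alg n \<sigma> m"
  shows "adaptive_run alg n \<sigma> (m + d) = adaptive_run alg n \<sigma> m"
proof (induction d)
  case (Suc d)
  with assms show ?case
    by (cases "adaptive_run alg n \<sigma> m") (simp add: stops_at_def)
qed simp

lemma key_classes_eventually_stable:
  fixes L :: "nat \<Rightarrow> 'a set list"
  assumes prefix: "\<And>j j'. j \<le> j' \<Longrightarrow> \<exists>Js. L j' = L j @ Js" and "finite S"
  shows "\<exists>J. \<forall>j\<ge>J. card (key (L j) ` S) = card (key (L J) ` S)"
proof -
  let ?classes = "\<lambda>j. card (key (L j) ` S)"
  have mono: "?classes j \<le> ?classes j'" if le: "j \<le> j'" for j j'
  proof -
    obtain Js where "L j' = L j @ Js" using prefix[OF le] by blast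
    then have "key (L j) ` S = (\<lambda>z. z div 2 ^ length Js) ` key (L j') ` S"
      by (auto simp: image_image key_append_div)
    then show ?thesis by (simp add: card_image_le assms(2))
  qed
  have "?classes j < card S + 1" for j
    using card_image_le[OF assms(2), of "key (L j)"] by simp
  then obtain J where "\<forall>j. ?classes j \<le> ?classes J"
    using Lattices_Big.ex_has_greatest_nat[of "\<lambda>_. True" 0 ?classes "card S + 1"] by blast
  with mono show ?thesis by (meson le_antisym)
qed

text \<open>The key order at the point where the key classes stop splitting is consistent with all
later keys, so on that ordering the algorithm follows the canonical run forever.\<close>

lemma adaptive_run_separating:
  assumes "alg_fully_orients alg n k"
  obtains \<sigma> m where "total_ordering n \<sigma>" and "stops_at alg n \<sigma> m"
    and "separates (set (snd (adaptive_run alg n \<sigma> m))) {1..n}"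
    and "\<forall>I\<in>set (snd (adaptive_run alg n \<sigma> m)). I \<subseteq> {1..n} \<and> card I \<le> k"
proof -
  let ?run = "canonical_run alg n"
  obtain J where J: "\<forall>j\<ge>J. card (key (snd (?run j)) ` {1..n}) = card (key (snd (?run J)) ` {1..n})"
    using key_classes_eventually_stable[of "\<lambda>j. snd (?run j)", OF canonical_run_prefix] by blast
  define \<sigma> where "\<sigma> = key_order n (snd (?run J))"
  have consistent: "key_consistent n (snd (?run j)) \<sigma>" if le: "J \<le> j" for j
  proof -
    obtain Js where "snd (?run j) = snd (?run J) @ Js" using canonical_run_prefix[OF le] by blast
    with J le show ?thesis
      using key_consistent_append_stable key_order by (metis \<sigma>_def)
  qed
  have \<sigma>: "total_ordering n \<sigma>" using key_order by (simp add: \<sigma>_def)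
  then obtain m where m: "stops_at alg n \<sigma> m" "fully_oriented n (fst (adaptive_run alg n \<sigma> m))"
    "\<forall>I\<in>set (snd (adaptive_run alg n \<sigma> m)). I \<subseteq> {1..n} \<and> card I \<le> k"
    using assms unfolding alg_fully_orients_def by blast
  have "adaptive_run alg n \<sigma> m = adaptive_run alg n \<sigma> (m + J)"
    using adaptive_run_stopped[OF m(1)] by simp
  also have "\<dots> = ?run (m + J)"
    using adaptive_run_eq_canonical_run consistent by simp
  finally have run_m: "adaptive_run alg n \<sigma> m = ?run (m + J)" .
  have "separates (set (snd (?run (m + J)))) {1..n}"
  proof (rule separates_if_key_determined[where \<sigma> = \<sigma>])
    fix \<sigma>' assume "key_consistent n (snd (?run (m + J))) \<sigma>'"
    then show "fst (?run (m + J)) \<subseteq> dag_edges n \<sigma>'"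
      using adaptive_run_eq_canonical_run adaptive_run_subset_dag_edges by metis
  qed (use consistent m(2) run_m in auto)
  with that \<sigma> m run_m show thesis by simp
qed

section \<open>Entropy bound for separating families\<close>

definition xlnx :: "real \<Rightarrow> real" where
  "xlnx x = x * ln x"

definition log_ratio :: "real \<Rightarrow> real \<Rightarrow> real" where
  "log_ratio a b = a * ln (b / a)"

text \<open>split_entropy x y is (x + y) times the binary entropy (in nats) of x / (x + y).\<close>

definition split_entropy :: "real \<Rightarrow> real \<Rightarrow> real" where
  "split_entropy x y = log_ratio x (x + y) + log_ratio y (x + y)"

lemma log_ratio_0 [simp]: "log_ratio 0 b = 0"
  by (simp add: log_ratio_def)

lemma xlnx_add:
  assumes "0 \<le> x" and "0 \<le> y"
  shows "xlnx (x + y) = xlnx x + xlnx y + split_entropy x y"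
proof (cases "x = 0 \<or> y = 0")
  case False
  with assms have "x > 0" "y > 0" by auto
  then show ?thesis by (simp add: xlnx_def split_entropy_def log_ratio_def ln_div algebra_simps)
qed (use assms in \<open>auto simp: xlnx_def split_entropy_def log_ratio_def\<close>)

lemma log_ratio_mono:
  assumes "0 \<le> a" and "a \<le> b" and "b \<le> b'"
  shows "log_ratio a b \<le> log_ratio a b'"
proof (cases "a = 0")
  case False
  with assms show ?thesis
    unfolding log_ratio_def by (intro mult_left_mono ln_mono) (auto simp: divide_right_mono)
qed simp

lemma log_sum_inequality:
  assumes "0 \<le> a1" "a1 \<le> b1" "0 \<le> a2" "a2 \<le> b2"
  shows "log_ratio a1 b1 + log_ratio a2 b2 \<le> log_ratio (a1 + a2) (b1 + b2)"
proof (cases "a1 = 0 \<or> a2 = 0")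
  case True
  with assms show ?thesis using log_ratio_mono by (auto simp: add.commute)
next
  case False
  define A B where "A = a1 + a2" and "B = b1 + b2"
  with False assms have AB: "A > 0" "B > 0" by auto
  have single: "log_ratio a b - a * ln (B / A) \<le> b * A / B - a" if "a > 0" "b > 0" for a b
  proof -
    have "ln (b / a) - ln (B / A) = ln ((b * A) / (a * B))"
      using AB that by (simp add: ln_div ln_mult)
    also have "\<dots> \<le> (b * A) / (a * B) - 1"
      using AB that by (intro ln_le_minus_one) auto
    finally have "a * (ln (b / a) - ln (B / A)) \<le> a * ((b * A) / (a * B) - 1)"
      using that by (intro mult_left_mono) auto
    with that AB show ?thesis by (simp add: log_ratio_def algebra_simps)
  qed
  have "b1 * A / B + b2 * A / B = A"
    using AB by (simp add: B_def add_divide_distrib[symmetric] distrib_right[symmetric])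
  with single[of a1 b1] single[of a2 b2] False assms show ?thesis
    by (simp add: log_ratio_def A_def B_def algebra_simps)
qed

lemma split_entropy_superadditive:
  assumes "0 \<le> x1" "0 \<le> y1" "0 \<le> x2" "0 \<le> y2"
  shows "split_entropy x1 y1 + split_entropy x2 y2 \<le> split_entropy (x1 + x2) (y1 + y2)"
  using log_sum_inequality[of x1 "x1 + y1" x2 "x2 + y2"]
    log_sum_inequality[of y1 "x1 + y1" y2 "x2 + y2"] assms
  by (simp add: split_entropy_def algebra_simps)

text \<open>Induction on F: the first set I splits S into S \<inter> I and S - I at cost
split_entropy |S \<inter> I| |S - I| (lemma xlnx_add), and superadditivity lets the later sets pay
for the splits of both halves at once.\<close>

lemma xlnx_card_le_split_entropy_sum:
  assumes "finite F" and "finite S" and "separates F S"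
  shows "xlnx (card S) \<le> (\<Sum>I\<in>F. split_entropy (card (S \<inter> I)) (card (S - I)))"
  using assms
proof (induction F arbitrary: S rule: finite_induct)
  case empty
  then have "card S \<le> 1" unfolding separates_def by (auto simp: card_le_Suc0_iff_eq)
  then have "card S = 0 \<or> card S = 1" by auto
  then show ?case by (auto simp: xlnx_def)
next
  case (insert I F)
  let ?H = "\<lambda>T J. split_entropy (card (T \<inter> J)) (card (T - J))"
  have sep: "separates F (S \<inter> I)" "separates F (S - I)"
    using insert.prems(2) by (auto simp: separates_def)
  have card_split: "card (T \<inter> J) = card (T \<inter> I \<inter> J) + card ((T - I) \<inter> J)"
    "card (T - J) = card (T \<inter> I - J) + card (T - I - J)" if "finite T" for T J
  proof -
    have "T \<inter> J = (T \<inter> I \<inter> J) \<union> ((T - I) \<inter> J)" "T - J = (T \<inter> I - J) \<union> (T - I - J)" by auto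
    with that show "card (T \<inter> J) = card (T \<inter> I \<inter> J) + card ((T - I) \<inter> J)"
      "card (T - J) = card (T \<inter> I - J) + card (T - I - J)"
      by (simp_all add: card_Un_disjoint Int_Diff_disjoint disjoint_iff)
  qed
  have "xlnx (card S) = xlnx (card (S \<inter> I)) + xlnx (card (S - I)) + ?H S I"
    using xlnx_add card_Int_Diff[OF insert.prems(1), of I] by (simp add: Diff_eq)
  also have "\<dots> \<le> (\<Sum>J\<in>F. ?H (S \<inter> I) J) + (\<Sum>J\<in>F. ?H (S - I) J) + ?H S I"
    using insert.IH sep insert.prems(1) by (intro add_mono) auto
  also have "\<dots> \<le> (\<Sum>J\<in>F. ?H S J) + ?H S I"
    unfolding sum.distrib[symmetric]
    by (intro add_right_mono sum_mono)
      (simp add: card_split[OF insert.prems(1)] split_entropy_superadditive)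
  also have "\<dots> = (\<Sum>J\<in>insert I F. ?H S J)"
    using insert.hyps by simp
  finally show ?case .
qed

lemma split_entropy_le:
  fixes a k n :: real
  assumes "0 \<le> a" and "a \<le> k" and "0 < k" and "k < n"
  shows "split_entropy a (n - a) \<le> k * ln (n * exp 1 / k)"
proof -
  have ln_nk: "0 \<le> ln (n / k)" using assms by simp
  have target: "k * ln (n * exp 1 / k) = k * ln (n / k) + k"
    using assms by (simp add: ln_mult ln_div algebra_simps)
  show ?thesis
  proof (cases "a = 0")
    case True
    with assms ln_nk show ?thesis by (simp add: target split_entropy_def log_ratio_def)
  next
    case False
    with assms have a: "0 < a" "0 < n - a" by auto
    have "log_ratio (n - a) n \<le> (n - a) * (n / (n - a) - 1)"
      unfolding log_ratio_def using a by (intro mult_left_mono ln_le_minus_one) auto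
    also have "\<dots> = a" using a by (simp add: right_diff_distrib)
    finally have rest: "log_ratio (n - a) n \<le> a" .
    have "a * ln (k / a) \<le> a * (k / a - 1)"
      using a assms by (intro mult_left_mono ln_le_minus_one) auto
    also have "\<dots> = k - a" using a by (simp add: algebra_simps)
    finally have "a * ln (n / a) \<le> a * ln (n / k) + (k - a)"
      using a assms by (simp add: ln_div algebra_simps)
    moreover have "a * ln (n / k) \<le> k * ln (n / k)"
      using assms ln_nk by (intro mult_right_mono) auto
    ultimately show ?thesis
      using rest by (simp add: target split_entropy_def log_ratio_def)
  qed
qed

lemma separating_family_card_ge:
  fixes n k :: nat and F :: "nat set set"
  assumes "finite F" and "\<forall>I\<in>F. I \<subseteq> {1..n} \<and> card I \<le> k" and "separates F {1..n}"
    and "0 < k" and "k < n"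
  shows "real n / real k * log (real n * exp 1 / real k) (real n) \<le> real (card F)"
proof -
  have "xlnx (real n) \<le> (\<Sum>I\<in>F. split_entropy (card I) (card ({1..n} - I)))"
    using xlnx_card_le_split_entropy_sum[OF assms(1) _ assms(3)] assms(2)
    by (simp add: Int_absorb1)
  also have "\<dots> \<le> (\<Sum>I\<in>F. real k * ln (real n * exp 1 / real k))"
  proof (rule sum_mono)
    fix I assume "I \<in> F"
    with assms(2) have "card I \<le> k" "real (card ({1..n} - I)) = real n - real (card I)"
      by (auto simp: card_Diff_subset finite_subset of_nat_diff card_mono[of "{1..n}" I, simplified])
    with assms(4,5) show "split_entropy (card I) (card ({1..n} - I)) \<le> real k * ln (real n * exp 1 / real k)"
      by (simp add: split_entropy_le)
  qed
  finally have bound: "real n * ln (real n) \<le> real (card F) * (real k * ln (real n * exp 1 / real k))"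
    by (simp add: xlnx_def)
  have "exp 1 \<le> real n * exp 1 / real k" using assms(4,5) by (simp add: field_simps)
  then have "0 < ln (real n * exp 1 / real k)"
    by (meson exp_gt_one less_le_trans ln_gt_zero zero_less_one)
  with bound assms(4) show ?thesis
    by (simp add: log_def divide_le_eq mult.commute mult.left_commute)
qed

section \<open>A small separating family\<close>

lemma base_digits_differ:
  fixes a x y :: nat
  assumes "x < a ^ t" and "y < a ^ t" and "x \<noteq> y"
  shows "\<exists>j<t. x div a ^ j mod a \<noteq> y div a ^ j mod a"
  using assms
proof (induction t arbitrary: x y)
  case (Suc t)
  show ?case
  proof (cases "x mod a = y mod a")
    case True
    with Suc.prems(3) have "x div a \<noteq> y div a" by (metis div_mod_decomp)
    moreover have "0 < a" using Suc.prems(1) by (cases "a = 0") auto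
    with Suc.prems have "x div a < a ^ t" "y div a < a ^ t"
      by (auto simp: div_less_iff_less_mult mult.commute)
    ultimately obtain j where "j < t" "x div a div a ^ j mod a \<noteq> y div a div a ^ j mod a"
      using Suc.IH by blast
    then show ?thesis by (intro exI[of _ "Suc j"]) (auto simp: div_mult2_eq)
  qed (intro exI[of _ 0]; simp)
qed simp

text \<open>For j > 0 the j-th base-a digit of x, shifted by the last digit of x. Together with
x div a it determines x, which bounds the size of the sets built from it.\<close>

definition shifted_digit :: "nat \<Rightarrow> nat \<Rightarrow> nat \<Rightarrow> nat" where
  "shifted_digit a j x = (if j = 0 then x mod a else (x div a ^ j + x) mod a)"

lemma shifted_digit_less: "0 < a \<Longrightarrow> shifted_digit a j x < a"
  by (simp add: shifted_digit_def)

lemma mod_add_right_cancel_nat: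
  fixes a c d x :: nat
  shows "(c + x) mod a = (d + x) mod a \<longleftrightarrow> c mod a = d mod a"
  by (simp add: mod_eq_iff_dvd_symdiff_nat)

lemma shifted_digit_inj:
  assumes "shifted_digit a j x = shifted_digit a j y" and "x div a = y div a"
  shows "x = y"
proof -
  have "x mod a = y mod a"
  proof (cases j)
    case 0
    with assms(1) show ?thesis by (simp add: shifted_digit_def)
  next
    case (Suc i)
    with assms(2) have "x div a ^ j = y div a ^ j" by (simp add: div_mult2_eq)
    with assms(1) Suc have "(x + x div a ^ j) mod a = (y + x div a ^ j) mod a"
      by (simp add: shifted_digit_def add.commute)
    then show ?thesis by (simp add: mod_add_right_cancel_nat)
  qed
  with assms(2) show ?thesis by (metis div_mult_mod_eq)
qed

lemma shifted_digits_differ: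
  assumes "x < a ^ t" and "y < a ^ t" and "x \<noteq> y"
  shows "\<exists>j<t. shifted_digit a j x \<noteq> shifted_digit a j y"
proof -
  obtain j where j: "j < t" "x div a ^ j mod a \<noteq> y div a ^ j mod a"
    using base_digits_differ[OF assms] by blast
  show ?thesis
  proof (cases "x mod a = y mod a")
    case True
    have "j \<noteq> 0"
    proof
      assume "j = 0"
      with True j(2) show False by simp
    qed
    have "(x div a ^ j + x) mod a = (x div a ^ j + y) mod a"
      using True mod_add_right_eq[of "x div a ^ j" x a] mod_add_right_eq[of "x div a ^ j" y a]
      by simp
    also have "\<dots> \<noteq> (y div a ^ j + y) mod a"
      using j(2) by (simp add: mod_add_right_cancel_nat)
    finally have "shifted_digit a j x \<noteq> shifted_digit a j y"
      using \<open>j \<noteq> 0\<close> by (simp add: shifted_digit_def)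
    with j(1) show ?thesis by blast
  next
    case False
    with j(1) show ?thesis by (intro exI[of _ 0]) (auto simp: shifted_digit_def)
  qed
qed

definition digit_family :: "nat \<Rightarrow> nat \<Rightarrow> nat \<Rightarrow> nat set set" where
  "digit_family n a t =
     (\<lambda>(j, d). {u \<in> {1..n}. shifted_digit a j (u - 1) = d}) ` ({0..<t} \<times> {1..<a})"

lemma card_digit_family: "card (digit_family n a t) \<le> (a - 1) * t"
proof -
  have "card (digit_family n a t) \<le> card ({0..<t} \<times> {1..<a})"
    unfolding digit_family_def by (rule card_image_le) simp
  then show ?thesis by (simp add: card_cartesian_product mult.commute)
qed

lemma digit_family_small_sets:
  assumes "n \<le> a * k" and "I \<in> digit_family n a t"
  shows "I \<subseteq> {1..n} \<and> card I \<le> k"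
proof -
  obtain j d where I: "I = {u \<in> {1..n}. shifted_digit a j (u - 1) = d}"
    using assms(2) unfolding digit_family_def by auto
  define h where "h u = (u - 1) div a" for u
  have "inj_on h I"
  proof (rule inj_onI)
    fix u v assume u: "u \<in> I" and v: "v \<in> I" and "h u = h v"
    have "shifted_digit a j (u - 1) = shifted_digit a j (v - 1)" using u v I by simp
    moreover have "(u - 1) div a = (v - 1) div a" using \<open>h u = h v\<close> by (simp add: h_def)
    ultimately have "u - 1 = v - 1" by (rule shifted_digit_inj)
    with u v I show "u = v" by auto
  qed
  moreover have "h ` I \<subseteq> {..<k}"
  proof
    fix x assume "x \<in> h ` I"
    then obtain u where "u \<in> {1..n}" "x = (u - 1) div a" using I h_def by auto
    moreover have "u - 1 < a * k" using \<open>u \<in> {1..n}\<close> assms(1) by auto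
    then have "u - 1 < k * a" by (simp only: mult.commute)
    ultimately show "x \<in> {..<k}" by (simp add: less_mult_imp_div_less)
  qed
  then have "card (h ` I) \<le> k" using card_mono[OF finite_lessThan] by fastforce
  with \<open>inj_on h I\<close> have "card I \<le> k" by (simp add: card_image)
  with I show ?thesis by blast
qed

lemma digit_family_separates:
  assumes "n \<le> a ^ t"
  shows "separates (digit_family n a t) {1..n}"
  unfolding separates_def
proof (intro ballI impI)
  fix u v :: nat assume u: "u \<in> {1..n}" and v: "v \<in> {1..n}" and "u \<noteq> v"
  with assms have "u - 1 < a ^ t" "v - 1 < a ^ t" "u - 1 \<noteq> v - 1" by auto
  then obtain j where j: "j < t" "shifted_digit a j (u - 1) \<noteq> shifted_digit a j (v - 1)"
    using shifted_digits_differ by blast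
  have "0 < a"
  proof (rule ccontr)
    assume "\<not> 0 < a"
    with j(1) have "a ^ t = 0" by simp
    with assms u show False by simp
  qed
  define S where "S d = {w \<in> {1..n}. shifted_digit a j (w - 1) = d}" for d
  have family: "S d \<in> digit_family n a t" if "0 < d" "d < a" for d
    unfolding digit_family_def S_def using that j(1) by (intro image_eqI[where x = "(j, d)"]) auto
  have separated: "\<exists>I\<in>digit_family n a t. w \<in> I \<and> w' \<notin> I"
    if "w \<in> {1..n}" "shifted_digit a j (w - 1) \<noteq> shifted_digit a j (w' - 1)"
      "shifted_digit a j (w - 1) \<noteq> 0" for w w'
  proof -
    have "S (shifted_digit a j (w - 1)) \<in> digit_family n a t"
      using family shifted_digit_less[OF \<open>0 < a\<close>] that(3) by blast
    moreover have "w \<in> S (shifted_digit a j (w - 1))" "w' \<notin> S (shifted_digit a j (w - 1))"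
      using that(1,2) by (auto simp: S_def)
    ultimately show ?thesis by blast
  qed
  show "\<exists>I\<in>digit_family n a t. (u \<in> I) \<noteq> (v \<in> I)"
  proof (cases "shifted_digit a j (u - 1) = 0")
    case True
    with separated[of v u] v j(2) show ?thesis by force
  next
    case False
    with separated[of u v] u j(2) show ?thesis by force
  qed
qed

lemma separating_family_exists:
  fixes n k :: nat
  assumes "0 < k" and "k < n"
  defines "a \<equiv> nat \<lceil>real n / real k\<rceil>"
  shows "\<exists>F. finite F \<and> (\<forall>I\<in>F. I \<subseteq> {1..n} \<and> card I \<le> k) \<and> separates F {1..n} \<and>
             card F \<le> (a - 1) * nat \<lceil>log (real a) (real n)\<rceil>"
proof -
  define t where "t = nat \<lceil>log (real a) (real n)\<rceil>"
  have "real a = of_int \<lceil>real n / real k\<rceil>" by (simp add: a_def)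
  then have "real n / real k \<le> real a" using le_of_int_ceiling[of "real n / real k"] by simp
  then have "real n \<le> real a * real k" using assms(1) by (simp add: field_simps)
  then have nak: "n \<le> a * k" by (simp flip: of_nat_mult)
  have "1 < real n / real k" using assms by simp
  with \<open>real n / real k \<le> real a\<close> have "1 < real a" by linarith
  then have "0 \<le> log (real a) (real n)" using assms by simp
  then have "real t = of_int \<lceil>log (real a) (real n)\<rceil>" by (simp add: t_def)
  then have "log (real a) (real n) \<le> real t" using le_of_int_ceiling by simp
  then have "real n \<le> real a powr real t"
    using \<open>1 < real a\<close> assms by (simp add: log_le_iff)
  then have "real n \<le> real a ^ t" using \<open>1 < real a\<close> by (simp add: powr_realpow)
  then have "n \<le> a ^ t" by (simp flip: of_nat_power)
  show ?thesis
    unfolding t_def[symmetric]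
  proof (intro exI conjI)
    show "finite (digit_family n a t)" by (simp add: digit_family_def)
    show "\<forall>I\<in>digit_family n a t. I \<subseteq> {1..n} \<and> card I \<le> k"
      using digit_family_small_sets[OF nak] by blast
    show "separates (digit_family n a t) {1..n}"
      using \<open>n \<le> a ^ t\<close> by (rule digit_family_separates)
    show "card (digit_family n a t) \<le> (a - 1) * t"
      by (rule card_digit_family)
  qed
qed

theorem theorem3:
  fixes n k :: nat
  assumes "0 < n" and "0 < k" and "real k < real n / 2"
  shows "(\<forall>alg. alg_fully_orients alg n k \<longrightarrow>
            (\<exists>\<sigma>. total_ordering n \<sigma> \<and>
               (\<exists>m. stops_at alg n \<sigma> m \<and>
                  real n / real k * log (real n * exp 1 / real k) (real n)
                    \<le> real (length (snd (adaptive_run alg n \<sigma> m))))))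
       \<and> (\<forall>\<I>. (\<forall>I \<in> \<I>. I \<subseteq> {1..n} \<and> card I \<le> k) \<and> family_orients_some_order n \<I> \<longrightarrow>
            real n / real k * log (real n * exp 1 / real k) (real n) \<le> real (card \<I>))
       \<and> (\<exists>\<I>. (\<forall>I \<in> \<I>. I \<subseteq> {1..n} \<and> card I \<le> k) \<and> family_orients_every_order n \<I> \<and>
            card \<I> \<le> (nat \<lceil>real n / real k\<rceil> - 1) *
                      nat \<lceil>log (real (nat \<lceil>real n / real k\<rceil>)) (real n)\<rceil>)"
proof -
  have "k < n" using assms(3) by linarith
  note card_ge = separating_family_card_ge[OF _ _ _ assms(2) this]
  show ?thesis
  proof (intro conjI allI impI)
    fix alg assume "alg_fully_orients alg n k"
    then obtain \<sigma> m where \<sigma>: "total_ordering n \<sigma>" and m: "stops_at alg n \<sigma> m"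
      and sep: "separates (set (snd (adaptive_run alg n \<sigma> m))) {1..n}"
      and small: "\<forall>I\<in>set (snd (adaptive_run alg n \<sigma> m)). I \<subseteq> {1..n} \<and> card I \<le> k"
      by (rule adaptive_run_separating)
    have "real n / real k * log (real n * exp 1 / real k) (real n)
        \<le> real (card (set (snd (adaptive_run alg n \<sigma> m))))"
      using card_ge[OF _ small sep] by simp
    also have "\<dots> \<le> real (length (snd (adaptive_run alg n \<sigma> m)))"
      by (simp add: card_length)
    finally show "\<exists>\<sigma>. total_ordering n \<sigma> \<and> (\<exists>m. stops_at alg n \<sigma> m \<and>
        real n / real k * log (real n * exp 1 / real k) (real n)
          \<le> real (length (snd (adaptive_run alg n \<sigma> m))))"
      using \<sigma> m by blast
  next
    fix \<I> assume "(\<forall>I\<in>\<I>. I \<subseteq> {1..n} \<and> card I \<le> k) \<and> family_orients_some_order n \<I>"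
    with family_orients_some_order_separates
    show "real n / real k * log (real n * exp 1 / real k) (real n) \<le> real (card \<I>)"
      by (intro card_ge) auto
  next
    show "\<exists>\<I>. (\<forall>I\<in>\<I>. I \<subseteq> {1..n} \<and> card I \<le> k) \<and> family_orients_every_order n \<I> \<and>
        card \<I> \<le> (nat \<lceil>real n / real k\<rceil> - 1) * nat \<lceil>log (real (nat \<lceil>real n / real k\<rceil>)) (real n)\<rceil>"
    proof -
      obtain \<I> where "finite \<I>" "\<forall>I\<in>\<I>. I \<subseteq> {1..n} \<and> card I \<le> k" "separates \<I> {1..n}"
        "card \<I> \<le> (nat \<lceil>real n / real k\<rceil> - 1) * nat \<lceil>log (real (nat \<lceil>real n / real k\<rceil>)) (real n)\<rceil>"
        using separating_family_exists[OF assms(2) \<open>k < n\<close>] by blast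
      then show ?thesis
        by (intro exI[of _ \<I>]) (simp add: family_orients_every_order_if_separates)
    qed
  qed
qed
end
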